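(* Let $\Phi\in C_c^2(\mathbb R)$ be positive, $k(Z,Z')=\Phi(u(Z,Z'))$, let $P(v)=\int_v^\infty\Phi(u)\arccos\big(\frac{1-u+2v}{1+u}\big)du$ and $g(\eta)=P(\frac14(e^\eta+e^{-\eta}-2))$. For $a\in\mathbb C$, $b\in\mathbb R$ put $$n(a,b)=\begin{pmatrix}1&a&\frac{|a|^2}{2}+ib\\0&1&\bar a\\0&0&1\end{pmatrix}.$$ Then for $Z,Z'\in\mathfrak S_2$, $$\int_{\mathbb R}\int_{\mathbb C}k(Z,n(a,b)Z')\,da\,d\bar a\,db=2\pi\rho\rho'\,g(\log\rho'-\log\rho),$$ where $\rho=\rho(Z)$, $\rho'=\rho(Z')$.
   Context: $\mathfrak S_2=\{(z_1,z_2)\in\mathbb C^2: z_1+\bar z_1-z_2\bar z_2>0\}$, on which $3\times3$ matrices $g=(g_{ij})$ in $SU(2,1)$ act by $g(z_1,z_2)=\big(\frac{g_{11}z_1+g_{12}z_2+g_{13}}{g_{31}z_1+g_{32}z_2+g_{33}},\frac{g_{21}z_1+g_{22}z_2+g_{23}}{g_{31}z_1+g_{32}z_2+g_{33}}\big)$ (so $n(a,b)(z_1,z_2)=(z_1+az_2+\frac{|a|^2}{2}+ib,\ z_2+\bar a)$). $\rho(Z,W)=\bar z_1+w_1-\bar z_2w_2$, $\rho(Z)=\rho(Z,Z)$, $u(Z,W)=\frac{|\rho(Z,W)|^2}{\rho(Z)\rho(W)}-1$. *)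

theory Defs
  imports "HOL-Analysis.Analysis"
begin

type_synonym pt = "complex \<times> complex"

definition Siegel2 :: "pt set" where
  "Siegel2 = {(z1, z2). Re (z1 + cnj z1 - z2 * cnj z2) > 0}"

definition rhoZW :: "pt \<Rightarrow> pt \<Rightarrow> complex" where
  "rhoZW Z W = cnj (fst Z) + fst W - cnj (snd Z) * snd W"

definition rhoZ :: "pt \<Rightarrow> real" where
  "rhoZ Z = Re (rhoZW Z Z)"

definition uZW :: "pt \<Rightarrow> pt \<Rightarrow> real" where
  "uZW Z W = (cmod (rhoZW Z W))\<^sup>2 / (rhoZ Z * rhoZ W) - 1"

text \<open>Action of the matrix n(a,b) by linear fractional transformation (third row is (0,0,1)).\<close>
definition nact :: "complex \<Rightarrow> real \<Rightarrow> pt \<Rightarrow> pt" where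
  "nact a b Z = (fst Z + a * snd Z + complex_of_real ((cmod a)\<^sup>2 / 2) + \<i> * complex_of_real b,
                 snd Z + cnj a)"

definition C2c :: "(real \<Rightarrow> real) \<Rightarrow> bool" where
  "C2c \<Phi> \<longleftrightarrow> (\<exists>\<Phi>' \<Phi>''. (\<forall>x. (\<Phi> has_real_derivative \<Phi>' x) (at x))
                    \<and> (\<forall>x. (\<Phi>' has_real_derivative \<Phi>'' x) (at x))
                    \<and> continuous_on UNIV \<Phi>'')
            \<and> compact (closure {x. \<Phi> x \<noteq> 0})"

definition kern :: "(real \<Rightarrow> real) \<Rightarrow> pt \<Rightarrow> pt \<Rightarrow> real" where
  "kern \<Phi> Z W = \<Phi> (uZW Z W)"

definition Pfun :: "(real \<Rightarrow> real) \<Rightarrow> real \<Rightarrow> real" where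
  "Pfun \<Phi> v = (LBINT u:{v..}. \<Phi> u * arccos ((1 - u + 2 * v) / (1 + u)))"

definition gfun :: "(real \<Rightarrow> real) \<Rightarrow> real \<Rightarrow> real" where
  "gfun \<Phi> \<eta> = Pfun \<Phi> ((exp \<eta> + exp (- \<eta>) - 2) / 4)"

end

theory Submission
  imports Defs
begin

(* Put r = rhoZ Z and r' = rhoZ Z'. The maps n(a,b) preserve rho, and rho(Z, n(a,b) Z') has real part
   (r + r' + |a + c|^2) / 2 and imaginary part b + m(a) for some constant c and real function m.
   Translating b and then a removes c and m(a), and polar coordinates in a leave pi times an integral
   over s = |a|^2 >= 0. With t = (r + r' + s) / 2 what remains is a radial function of (t, b) integrated
   over the half plane t >= t0 = (r + r') / 2; the circle of radius sqrt w meets this half plane in an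
   arc of angle 2 arccos (t0 / sqrt w), and arccos (2 q - 1) = 2 arccos (sqrt q) turns this angle into
   the arccos in the definition of Pfun. *)

lemma borel_measurable_arccos [measurable]: "arccos \<in> borel_measurable borel"
proof -
  have empty: "(\<lambda>t. 0 \<le> t \<and> t \<le> pi \<and> cos t = y) = (\<lambda>t. False)" if "y \<notin> {-1..1}" for y :: real
    using that cos_le_one cos_ge_minus_one by (auto simp: fun_eq_iff)
  have outside: "arccos x = arccos 2" if "x \<notin> {-1..1}" for x
  proof -
    have two: "(2::real) \<notin> {-1..1}" by simp
    show ?thesis unfolding arccos_def empty[OF that] empty[OF two] ..
  qed
  have "(\<lambda>x. if x \<in> {-1..1} then arccos x else arccos 2) \<in> borel_measurable borel"
    by (intro borel_measurable_continuous_on_if continuous_on_arccos' continuous_on_const) auto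
  moreover have "(\<lambda>x. if x \<in> {-1..1} then arccos x else arccos 2) = arccos"
  proof
    show "(if x \<in> {-1..1} then arccos x else arccos 2) = arccos x" for x
      using outside[of x] by auto
  qed
  ultimately show ?thesis by (simp only:)
qed

lemma borel_measurable_cnj [measurable (raw)]:
  fixes f :: "'a \<Rightarrow> complex"
  assumes "f \<in> borel_measurable M"
  shows "(\<lambda>x. cnj (f x)) \<in> borel_measurable M"
  using measurable_compose[OF assms borel_measurable_continuous_onI[OF continuous_on_cnj[OF continuous_on_id]]]
  by (simp add: o_def)

lemma nn_integral_lborel_even:
  fixes g :: "real \<Rightarrow> ennreal"
  assumes [measurable]: "g \<in> borel_measurable borel" and even: "\<And>x. g (- x) = g x"
  shows "(\<integral>\<^sup>+x. g x \<partial>lborel) = 2 * (\<integral>\<^sup>+x. g x * indicator {0..} x \<partial>lborel)"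
proof -
  have "(\<integral>\<^sup>+x. g x \<partial>lborel) = (\<integral>\<^sup>+x. g x * indicator {0..} x + g x * indicator {..<0} x \<partial>lborel)"
    by (intro nn_integral_cong) (auto split: split_indicator)
  also have "\<dots> = (\<integral>\<^sup>+x. g x * indicator {0..} x \<partial>lborel) + (\<integral>\<^sup>+x. g x * indicator {..<0} x \<partial>lborel)"
    by (rule nn_integral_add) auto
  also have "(\<integral>\<^sup>+x. g x * indicator {..<0} x \<partial>lborel)
      = (\<integral>\<^sup>+x. g (0 + (-1) * x) * indicator {..<0} (0 + (-1) * x) \<partial>lborel)"
    by (subst nn_integral_real_affine[of _ "-1" 0]) auto
  also have "\<dots> = (\<integral>\<^sup>+x. g x * indicator {0..} x \<partial>lborel)"
    using AE_lborel_singleton[of 0]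
    by (intro nn_integral_cong_AE) (auto simp: even split: split_indicator elim!: eventually_mono)
  finally show ?thesis by (simp add: mult_2)
qed

lemma nn_integral_atLeast_eq_SUP_atLeastAtMost:
  fixes f :: "real \<Rightarrow> ennreal" and b :: "nat \<Rightarrow> real"
  assumes [measurable]: "f \<in> borel_measurable borel"
    and "incseq b" and unbounded: "\<And>x. \<exists>n. x \<le> b n"
  shows "(\<integral>\<^sup>+x. f x * indicator {a..} x \<partial>lborel) = (SUP n. \<integral>\<^sup>+x. f x * indicator {a..b n} x \<partial>lborel)"
proof -
  have "(SUP n. f x * indicator {a..b n} x) = f x * indicator {a..} x" for x
  proof (rule antisym)
    show "(SUP n. f x * indicator {a..b n} x) \<le> f x * indicator {a..} x"
      by (rule SUP_least) (auto split: split_indicator)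
    obtain n where "x \<le> b n" using unbounded by blast
    then show "f x * indicator {a..} x \<le> (SUP n. f x * indicator {a..b n} x)"
      by (intro SUP_upper2[of n]) (auto split: split_indicator)
  qed
  moreover have "incseq (\<lambda>n x. f x * indicator {a..b n} x)"
    using \<open>incseq b\<close>
    by (intro incseq_SucI le_funI) (auto simp: incseq_Suc_iff split: split_indicator, meson order.trans)
  ultimately show ?thesis
    by (simp add: nn_integral_monotone_convergence_SUP[symmetric])
qed

lemma nn_integral_substitution_square:
  fixes f :: "real \<Rightarrow> ennreal"
  assumes [measurable]: "f \<in> borel_measurable borel" and "0 < c" "0 \<le> a"
  shows "(\<integral>\<^sup>+x. f (c * x\<^sup>2) * ennreal (2 * c * x) * indicator {a..} x \<partial>lborel)
       = (\<integral>\<^sup>+w. f w * indicator {c * a\<^sup>2..} w \<partial>lborel)"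
proof -
  have unbounded: "\<exists>n. x \<le> c * (a + real n)\<^sup>2" for x
  proof -
    obtain n :: nat where "x / c \<le> real n" using real_arch_simple by blast
    moreover have "real n \<le> (a + real n)\<^sup>2"
    proof -
      have "real n \<le> (real n)\<^sup>2" using le_square[of n] by (simp add: power2_eq_square flip: of_nat_mult)
      also have "\<dots> \<le> (a + real n)\<^sup>2" using \<open>0 \<le> a\<close> by (intro power_mono) auto
      finally show ?thesis .
    qed
    ultimately show ?thesis using \<open>0 < c\<close> by (metis mult.commute order.trans pos_divide_le_eq)
  qed
  have "(\<integral>\<^sup>+x. f (c * x\<^sup>2) * ennreal (2 * c * x) * indicator {a..} x \<partial>lborel)
      = (SUP n. \<integral>\<^sup>+x. f (c * x\<^sup>2) * ennreal (2 * c * x) * indicator {a..a + real n} x \<partial>lborel)"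
  proof (rule nn_integral_atLeast_eq_SUP_atLeastAtMost)
    show "\<exists>n. x \<le> a + real n" for x
      using real_arch_simple[of x] \<open>0 \<le> a\<close> by (meson add_increasing order.trans)
  qed (auto simp: incseq_def)
  also have "\<dots> = (SUP n. \<integral>\<^sup>+w. f w * indicator {c * a\<^sup>2..c * (a + real n)\<^sup>2} w \<partial>lborel)"
  proof (intro SUP_cong refl)
    fix n :: nat
    show "(\<integral>\<^sup>+x. f (c * x\<^sup>2) * ennreal (2 * c * x) * indicator {a..a + real n} x \<partial>lborel)
        = (\<integral>\<^sup>+w. f w * indicator {c * a\<^sup>2..c * (a + real n)\<^sup>2} w \<partial>lborel)"
    proof (cases "n = 0")
      case True
      then show ?thesis by simp
    next
      case False
      then show ?thesis
        by (intro nn_integral_substitution_aux[symmetric, of f a "a + real n" "\<lambda>x. c * x\<^sup>2" "\<lambda>x. 2 * c * x"])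
           (use assms in \<open>auto intro!: derivative_eq_intros continuous_intros\<close>)
    qed
  qed
  also have "\<dots> = (\<integral>\<^sup>+w. f w * indicator {c * a\<^sup>2..} w \<partial>lborel)"
    using \<open>0 < c\<close> \<open>0 \<le> a\<close>
    by (intro nn_integral_atLeast_eq_SUP_atLeastAtMost[symmetric] unbounded)
       (auto simp: incseq_def intro!: mult_left_mono power_mono)
  finally show ?thesis .
qed

lemma arctan_eq_arccos:
  assumes "0 \<le> x"
  shows "arctan x = arccos (1 / sqrt (1 + x\<^sup>2))"
proof -
  have "0 \<le> arctan x" using assms by (simp add: arctan_le_iff[of 0, simplified])
  moreover have "arctan x \<le> pi" using arctan_ubound[of x] pi_gt_zero by linarith
  ultimately show ?thesis by (simp add: arccos_cos flip: cos_arctan)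
qed

lemma arccos_2_mult_minus_1:
  assumes "0 \<le> q" "q \<le> 1"
  shows "arccos (2 * q - 1) = 2 * arccos (sqrt q)"
proof -
  define \<theta> where "\<theta> = arccos (sqrt q)"
  have sqrt_q: "0 \<le> sqrt q" "sqrt q \<le> 1" using assms by auto
  then have "0 \<le> \<theta>" unfolding \<theta>_def by (intro arccos_lbound) linarith+
  moreover have "\<theta> \<le> pi / 2" unfolding \<theta>_def using sqrt_q by (intro arccos_le_pi2)
  moreover have "cos (2 * \<theta>) = 2 * q - 1"
  proof -
    have "cos \<theta> = sqrt q" unfolding \<theta>_def using sqrt_q by (intro cos_arccos) linarith+
    then show ?thesis using assms by (simp add: cos_double_cos)
  qed
  ultimately show ?thesis
    using arccos_cos[of "2 * \<theta>"] unfolding \<theta>_def by simp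
qed

lemma nn_integral_inverse_1_plus_square_symmetric:
  assumes "0 \<le> \<sigma>"
  shows "(\<integral>\<^sup>+s. ennreal (1 / (1 + s\<^sup>2)) * indicator {-\<sigma>..\<sigma>} s \<partial>lborel) = ennreal (2 * arctan \<sigma>)"
proof -
  have "(\<integral>\<^sup>+s. ennreal (1 / (1 + s\<^sup>2)) * indicator {-\<sigma>..\<sigma>} s \<partial>lborel) = arctan \<sigma> - arctan (-\<sigma>)"
    by (rule nn_integral_FTC_Icc)
       (use assms in \<open>auto intro!: derivative_eq_intros simp: field_simps add_pos_nonneg\<close>)
  then show ?thesis by (simp add: arctan_minus)
qed

lemma nn_integral_inverse_1_plus_square: "(\<integral>\<^sup>+s. ennreal (1 / (1 + s\<^sup>2)) \<partial>lborel) = ennreal pi"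
proof -
  have "(\<integral>\<^sup>+s. ennreal (1 / (1 + s\<^sup>2)) * indicator {0..} s \<partial>lborel) = pi / 2 - arctan 0"
    by (rule nn_integral_FTC_atLeast[where F = arctan])
       (auto intro!: derivative_eq_intros tendsto_arctan_at_top simp: field_simps add_pos_nonneg)
  then show ?thesis
    using ennreal_mult[of 2 "pi / 2"] by (subst nn_integral_lborel_even) auto
qed

(* In the coordinate s = b / t, ds / (1 + s^2) is the angle element at the origin, so this is the
   angle of the arc of the circle of radius sqrt w that lies in the half plane t >= t0. *)
lemma nn_integral_inverse_1_plus_square_sublevel:
  assumes "0 \<le> t0"
  shows "(\<integral>\<^sup>+s. ennreal (1 / (1 + s\<^sup>2)) * indicator {t0\<^sup>2 * (1 + s\<^sup>2)..} w \<partial>lborel)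
       = ennreal (2 * arccos (t0 / sqrt w)) * indicator {t0\<^sup>2..} w"
proof (cases "t0\<^sup>2 \<le> w")
  case False
  have "t0\<^sup>2 \<le> t0\<^sup>2 * (1 + s\<^sup>2)" for s by (simp add: algebra_simps)
  with False show ?thesis by (simp add: not_le order_less_le_trans)
next
  case w: True
  show ?thesis
  proof (cases "t0 = 0")
    case True
    with w show ?thesis by (simp add: nn_integral_inverse_1_plus_square)
  next
    case False
    with assms have "0 < t0" by simp
    define \<sigma> where "\<sigma> = sqrt (w / t0\<^sup>2 - 1)"
    have "1 \<le> w / t0\<^sup>2" using w \<open>0 < t0\<close> by simp
    then have \<sigma>2: "1 + \<sigma>\<^sup>2 = w / t0\<^sup>2" and "0 \<le> \<sigma>" unfolding \<sigma>_def by auto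
    have "indicator {t0\<^sup>2 * (1 + s\<^sup>2)..} w = (indicator {-\<sigma>..\<sigma>} s :: ennreal)" for s
    proof -
      have "w = t0\<^sup>2 * (1 + \<sigma>\<^sup>2)" using \<sigma>2 \<open>0 < t0\<close> by simp
      then have "t0\<^sup>2 * (1 + s\<^sup>2) \<le> w \<longleftrightarrow> s\<^sup>2 \<le> \<sigma>\<^sup>2"
        using \<open>0 < t0\<close> by simp
      also have "\<dots> \<longleftrightarrow> s \<in> {-\<sigma>..\<sigma>}"
        using \<open>0 \<le> \<sigma>\<close> by (simp add: abs_le_square_iff[symmetric] abs_le_iff) linarith
      finally show ?thesis by (simp split: split_indicator)
    qed
    moreover have "arctan \<sigma> = arccos (t0 / sqrt w)"
      using arctan_eq_arccos[OF \<open>0 \<le> \<sigma>\<close>] \<sigma>2 \<open>0 < t0\<close> by (simp add: real_sqrt_divide)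
    ultimately show ?thesis
      using w nn_integral_inverse_1_plus_square_symmetric[OF \<open>0 \<le> \<sigma>\<close>] by simp
  qed
qed

lemma nn_integral_half_plane_radial:
  fixes \<psi> :: "real \<Rightarrow> ennreal"
  assumes [measurable]: "\<psi> \<in> borel_measurable borel" and "0 \<le> t0"
  shows "(\<integral>\<^sup>+t. indicator {t0..} t * (\<integral>\<^sup>+b. \<psi> (t\<^sup>2 + b\<^sup>2) \<partial>lborel) \<partial>lborel)
       = (\<integral>\<^sup>+w. \<psi> w * ennreal (arccos (t0 / sqrt w)) * indicator {t0\<^sup>2..} w \<partial>lborel)"
proof -
  have polar: "indicator {t0..} t * (\<integral>\<^sup>+b. \<psi> (t\<^sup>2 + b\<^sup>2) \<partial>lborel)
      = (\<integral>\<^sup>+s. indicator {t0..} t * ennreal t * \<psi> (t\<^sup>2 * (1 + s\<^sup>2)) \<partial>lborel)" if "t \<noteq> 0" for t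
  proof (cases "t0 \<le> t")
    case True
    with \<open>0 \<le> t0\<close> \<open>t \<noteq> 0\<close> have "0 < t" by simp
    then have "(\<integral>\<^sup>+b. \<psi> (t\<^sup>2 + b\<^sup>2) \<partial>lborel) = ennreal t * (\<integral>\<^sup>+s. \<psi> (t\<^sup>2 + (0 + t * s)\<^sup>2) \<partial>lborel)"
      using nn_integral_real_affine[of "\<lambda>b. \<psi> (t\<^sup>2 + b\<^sup>2)" t 0] by simp
    also have "\<dots> = (\<integral>\<^sup>+s. ennreal t * \<psi> (t\<^sup>2 * (1 + s\<^sup>2)) \<partial>lborel)"
      by (subst nn_integral_cmult) (auto simp: algebra_simps power_mult_distrib)
    finally show ?thesis using True by simp
  qed simp
  have square: "(\<integral>\<^sup>+t. indicator {t0..} t * ennreal t * \<psi> (t\<^sup>2 * c) \<partial>lborel)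
      = (\<integral>\<^sup>+w. ennreal (1 / (2 * c)) * \<psi> w * indicator {c * t0\<^sup>2..} w \<partial>lborel)" if "0 < c" for c
  proof -
    have "ennreal t = ennreal (1 / (2 * c)) * ennreal (2 * c * t)" if "0 \<le> t" for t
      using \<open>0 < c\<close> that by (simp flip: ennreal_mult)
    then have "(\<integral>\<^sup>+t. indicator {t0..} t * ennreal t * \<psi> (t\<^sup>2 * c) \<partial>lborel)
        = (\<integral>\<^sup>+t. ennreal (1 / (2 * c)) * (\<psi> (c * t\<^sup>2) * ennreal (2 * c * t) * indicator {t0..} t) \<partial>lborel)"
      using \<open>0 \<le> t0\<close> by (intro nn_integral_cong) (auto simp: mult_ac split: split_indicator)
    also have "\<dots> = ennreal (1 / (2 * c)) * (\<integral>\<^sup>+w. \<psi> w * indicator {c * t0\<^sup>2..} w \<partial>lborel)"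
      using \<open>0 < c\<close> \<open>0 \<le> t0\<close> by (simp add: nn_integral_cmult nn_integral_substitution_square)
    also have "\<dots> = (\<integral>\<^sup>+w. ennreal (1 / (2 * c)) * \<psi> w * indicator {c * t0\<^sup>2..} w \<partial>lborel)"
      by (simp add: nn_integral_cmult mult.assoc)
    finally show ?thesis .
  qed
  have "(\<integral>\<^sup>+t. indicator {t0..} t * (\<integral>\<^sup>+b. \<psi> (t\<^sup>2 + b\<^sup>2) \<partial>lborel) \<partial>lborel)
      = (\<integral>\<^sup>+t. (\<integral>\<^sup>+s. indicator {t0..} t * ennreal t * \<psi> (t\<^sup>2 * (1 + s\<^sup>2)) \<partial>lborel) \<partial>lborel)"
    using AE_lborel_singleton[of 0] by (intro nn_integral_cong_AE) (auto elim!: eventually_mono simp: polar)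
  also have "\<dots> = (\<integral>\<^sup>+s. (\<integral>\<^sup>+t. indicator {t0..} t * ennreal t * \<psi> (t\<^sup>2 * (1 + s\<^sup>2)) \<partial>lborel) \<partial>lborel)"
    by (subst lborel_pair.Fubini') (auto simp: case_prod_beta)
  also have "\<dots> = (\<integral>\<^sup>+s. (\<integral>\<^sup>+w. ennreal (1 / (2 * (1 + s\<^sup>2))) * \<psi> w * indicator {(1 + s\<^sup>2) * t0\<^sup>2..} w \<partial>lborel) \<partial>lborel)"
    by (intro nn_integral_cong square) (simp add: add_pos_nonneg)
  also have "\<dots> = (\<integral>\<^sup>+w. (\<integral>\<^sup>+s. ennreal (1 / (2 * (1 + s\<^sup>2))) * \<psi> w * indicator {(1 + s\<^sup>2) * t0\<^sup>2..} w \<partial>lborel) \<partial>lborel)"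
    by (subst lborel_pair.Fubini') (auto simp: case_prod_beta indicator_def)
  also have "\<dots> = (\<integral>\<^sup>+w. \<psi> w * ennreal (1 / 2) * (\<integral>\<^sup>+s. ennreal (1 / (1 + s\<^sup>2)) * indicator {t0\<^sup>2 * (1 + s\<^sup>2)..} w \<partial>lborel) \<partial>lborel)"
  proof (intro nn_integral_cong)
    fix w
    have "ennreal (1 / (2 * (1 + s\<^sup>2))) = ennreal (1 / 2) * ennreal (1 / (1 + s\<^sup>2))" for s :: real
      by (subst ennreal_mult[symmetric]) auto
    then show "(\<integral>\<^sup>+s. ennreal (1 / (2 * (1 + s\<^sup>2))) * \<psi> w * indicator {(1 + s\<^sup>2) * t0\<^sup>2..} w \<partial>lborel)
        = \<psi> w * ennreal (1 / 2) * (\<integral>\<^sup>+s. ennreal (1 / (1 + s\<^sup>2)) * indicator {t0\<^sup>2 * (1 + s\<^sup>2)..} w \<partial>lborel)"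
      by (subst nn_integral_cmult[symmetric]) (auto simp: mult_ac indicator_def)
  qed
  also have "\<dots> = (\<integral>\<^sup>+w. \<psi> w * ennreal (arccos (t0 / sqrt w)) * indicator {t0\<^sup>2..} w \<partial>lborel)"
  proof -
    have "c * ennreal (1 / 2) * ennreal (2 * x) = c * ennreal x" for c and x :: real
      by (subst mult.assoc, subst ennreal_mult'[symmetric]) auto
    then show ?thesis
      using \<open>0 \<le> t0\<close> by (simp add: nn_integral_inverse_1_plus_square_sublevel mult.assoc[symmetric])
  qed
  finally show ?thesis .
qed

lemma nn_integral_plane_radial:
  fixes G :: "real \<Rightarrow> ennreal"
  assumes [measurable]: "G \<in> borel_measurable borel"
  shows "(\<integral>\<^sup>+x. (\<integral>\<^sup>+y. G (x\<^sup>2 + y\<^sup>2) \<partial>lborel) \<partial>lborel) = ennreal pi * (\<integral>\<^sup>+w. G w * indicator {0..} w \<partial>lborel)"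
proof -
  have "(\<integral>\<^sup>+x. indicator {0..} x * (\<integral>\<^sup>+y. G (x\<^sup>2 + y\<^sup>2) \<partial>lborel) \<partial>lborel)
      = (\<integral>\<^sup>+w. ennreal (pi / 2) * (G w * indicator {0..} w) \<partial>lborel)"
    using nn_integral_half_plane_radial[of G 0] by (simp add: mult_ac)
  also have "\<dots> = ennreal (pi / 2) * (\<integral>\<^sup>+w. G w * indicator {0..} w \<partial>lborel)"
    by (rule nn_integral_cmult) measurable
  finally show ?thesis
    using ennreal_mult[of 2 "pi / 2"] by (subst nn_integral_lborel_even) (auto simp: mult.commute mult.assoc)
qed

lemma lborel_complex_eq_distr_pair:
  "lborel = distr (lborel \<Otimes>\<^sub>M lborel) borel (\<lambda>(x, y). Complex x y)"
proof (rule lborel_eqI)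
  fix l u :: complex
  assume "\<And>b. b \<in> Basis \<Longrightarrow> l \<bullet> b \<le> u \<bullet> b"
  from this[of 1] this[of \<i>] have "Re l \<le> Re u" "Im l \<le> Im u" by auto
  have [measurable]: "(\<lambda>(x, y). Complex x y) \<in> borel_measurable (lborel \<Otimes>\<^sub>M lborel)"
    by (simp add: Complex_eq case_prod_beta)
  have "(\<lambda>(x, y). Complex x y) -` box l u \<inter> space (lborel \<Otimes>\<^sub>M lborel) = {Re l<..<Re u} \<times> {Im l<..<Im u}"
    by (auto simp: box_def Basis_complex_def space_pair_measure)
  then have "emeasure (distr (lborel \<Otimes>\<^sub>M lborel) borel (\<lambda>(x, y). Complex x y)) (box l u)
      = ennreal (Re u - Re l) * ennreal (Im u - Im l)"
    using \<open>Re l \<le> Re u\<close> \<open>Im l \<le> Im u\<close>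
    by (simp add: emeasure_distr lborel.emeasure_pair_measure_Times)
  also have "\<dots> = (\<Prod>b\<in>Basis. (u - l) \<bullet> b)"
    using \<open>Re l \<le> Re u\<close> \<open>Im l \<le> Im u\<close> by (simp add: Basis_complex_def ennreal_mult)
  finally show "emeasure (distr (lborel \<Otimes>\<^sub>M lborel) borel (\<lambda>(x, y). Complex x y)) (box l u)
      = (\<Prod>b\<in>Basis. (u - l) \<bullet> b)" .
qed simp

lemma nn_integral_lborel_complex:
  fixes f :: "complex \<Rightarrow> ennreal"
  assumes [measurable]: "f \<in> borel_measurable borel"
  shows "(\<integral>\<^sup>+z. f z \<partial>lborel) = (\<integral>\<^sup>+x. (\<integral>\<^sup>+y. f (Complex x y) \<partial>lborel) \<partial>lborel)"
proof -
  have [measurable]: "(\<lambda>(x, y). Complex x y) \<in> borel_measurable (lborel \<Otimes>\<^sub>M lborel)"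
    by (simp add: Complex_eq case_prod_beta)
  have "(\<integral>\<^sup>+z. f z \<partial>lborel) = (\<integral>\<^sup>+p. f (case p of (x, y) \<Rightarrow> Complex x y) \<partial>(lborel \<Otimes>\<^sub>M lborel))"
    by (subst lborel_complex_eq_distr_pair) (simp add: nn_integral_distr)
  also have "\<dots> = (\<integral>\<^sup>+x. (\<integral>\<^sup>+y. f (Complex x y) \<partial>lborel) \<partial>lborel)"
    by (subst lborel.nn_integral_fst[symmetric]) auto
  finally show ?thesis .
qed

lemma nn_integral_complex_radial:
  fixes G :: "real \<Rightarrow> ennreal" and c :: complex
  assumes [measurable]: "G \<in> borel_measurable borel"
  shows "(\<integral>\<^sup>+a. G ((cmod (a + c))\<^sup>2) \<partial>lborel) = ennreal pi * (\<integral>\<^sup>+w. G w * indicator {0..} w \<partial>lborel)"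
proof -
  have "(\<integral>\<^sup>+a. G ((cmod (a + c))\<^sup>2) \<partial>lborel) = (\<integral>\<^sup>+a. G ((cmod a)\<^sup>2) \<partial>distr lborel borel ((+) c))"
    by (subst nn_integral_distr) (auto simp: add.commute)
  also have "\<dots> = (\<integral>\<^sup>+x. (\<integral>\<^sup>+y. G (x\<^sup>2 + y\<^sup>2) \<partial>lborel) \<partial>lborel)"
    by (simp add: lborel_distr_plus nn_integral_lborel_complex cmod_power2)
  finally show ?thesis by (simp add: nn_integral_plane_radial)
qed

(* The shape of the integrand is that of kern under n(a,b): see uZW_nact below. *)
lemma nn_integral_heisenberg_orbit:
  fixes F :: "real \<Rightarrow> ennreal" and c :: complex and m :: "complex \<Rightarrow> real"
  assumes [measurable]: "F \<in> borel_measurable borel" and "0 < t0" "0 < R"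
  shows "(\<integral>\<^sup>+a. (\<integral>\<^sup>+b. F (((t0 + (cmod (a + c))\<^sup>2 / 2)\<^sup>2 + (b + m a)\<^sup>2) / R) \<partial>lborel) \<partial>lborel)
       = ennreal (2 * pi * R) *
         (\<integral>\<^sup>+x. F x * ennreal (arccos (sqrt (t0\<^sup>2 / R / x))) * indicator {t0\<^sup>2 / R..} x \<partial>lborel)"
proof -
  define H where "H s = (\<integral>\<^sup>+b. F (((t0 + s / 2)\<^sup>2 + b\<^sup>2) / R) \<partial>lborel)" for s
  have [measurable]: "H \<in> borel_measurable borel" unfolding H_def by measurable
  have "(\<integral>\<^sup>+a. (\<integral>\<^sup>+b. F (((t0 + (cmod (a + c))\<^sup>2 / 2)\<^sup>2 + (b + m a)\<^sup>2) / R) \<partial>lborel) \<partial>lborel)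
      = (\<integral>\<^sup>+a. H ((cmod (a + c))\<^sup>2) \<partial>lborel)"
  proof (intro nn_integral_cong)
    fix a
    show "(\<integral>\<^sup>+b. F (((t0 + (cmod (a + c))\<^sup>2 / 2)\<^sup>2 + (b + m a)\<^sup>2) / R) \<partial>lborel) = H ((cmod (a + c))\<^sup>2)"
      using nn_integral_real_affine[where c = 1 and t = "m a"
          and f = "\<lambda>b. F (((t0 + (cmod (a + c))\<^sup>2 / 2)\<^sup>2 + b\<^sup>2) / R)"]
      by (simp add: H_def add.commute)
  qed
  also have "\<dots> = ennreal pi * (\<integral>\<^sup>+s. H s * indicator {0..} s \<partial>lborel)"
    by (rule nn_integral_complex_radial) measurable
  also have "(\<integral>\<^sup>+s. H s * indicator {0..} s \<partial>lborel)
      = 2 * (\<integral>\<^sup>+t. indicator {t0..} t * (\<integral>\<^sup>+b. F ((t\<^sup>2 + b\<^sup>2) / R) \<partial>lborel) \<partial>lborel)"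
  proof -
    have "H (- 2 * t0 + 2 * t) * indicator {0..} (- 2 * t0 + 2 * t)
        = indicator {t0..} t * (\<integral>\<^sup>+b. F ((t\<^sup>2 + b\<^sup>2) / R) \<partial>lborel)" for t
    proof -
      have "t0 + (- 2 * t0 + 2 * t) / 2 = t" by (simp add: field_simps)
      then show ?thesis unfolding H_def by (simp add: mult.commute split: split_indicator)
    qed
    then show ?thesis by (subst nn_integral_real_affine[where c = 2 and t = "- 2 * t0"]) simp_all
  qed
  also have "\<dots> = 2 * (\<integral>\<^sup>+w. F (w / R) * ennreal (arccos (t0 / sqrt w)) * indicator {t0\<^sup>2..} w \<partial>lborel)"
    using \<open>0 < t0\<close> by (subst nn_integral_half_plane_radial) auto
  also have "(\<integral>\<^sup>+w. F (w / R) * ennreal (arccos (t0 / sqrt w)) * indicator {t0\<^sup>2..} w \<partial>lborel)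
      = ennreal R * (\<integral>\<^sup>+x. F x * ennreal (arccos (sqrt (t0\<^sup>2 / R / x))) * indicator {t0\<^sup>2 / R..} x \<partial>lborel)"
  proof -
    have "F ((0 + R * x) / R) * ennreal (arccos (t0 / sqrt (0 + R * x))) * indicator {t0\<^sup>2..} (0 + R * x)
        = F x * ennreal (arccos (sqrt (t0\<^sup>2 / R / x))) * indicator {t0\<^sup>2 / R..} x" for x
      using \<open>0 < t0\<close> \<open>0 < R\<close>
      by (simp add: real_sqrt_divide real_sqrt_mult field_simps split: split_indicator)
    with \<open>0 < R\<close> show ?thesis by (subst nn_integral_real_affine[where c = R and t = 0]) simp_all
  qed
  finally show ?thesis
    using \<open>0 < R\<close> by (simp add: ennreal_mult mult_ac)
qed

lemma (in pair_sigma_finite) integral_iterated_eq_of_nn_integral_iterated: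
  fixes f :: "'a \<Rightarrow> 'b \<Rightarrow> real"
  assumes [measurable]: "(\<lambda>(x, y). f x y) \<in> borel_measurable (M1 \<Otimes>\<^sub>M M2)"
    and "\<And>x y. 0 \<le> f x y" and "0 \<le> c"
    and nn: "(\<integral>\<^sup>+x. (\<integral>\<^sup>+y. f x y \<partial>M2) \<partial>M1) = ennreal c"
  shows "(\<integral>x. (\<integral>y. f x y \<partial>M2) \<partial>M1) = c"
proof -
  have nn_pair: "(\<integral>\<^sup>+p. ennreal (case p of (x, y) \<Rightarrow> f x y) \<partial>(M1 \<Otimes>\<^sub>M M2)) = ennreal c"
    using nn by (subst M2.nn_integral_fst[symmetric]) auto
  have int: "integrable (M1 \<Otimes>\<^sub>M M2) (\<lambda>(x, y). f x y)"
    using nn_pair \<open>\<And>x y. 0 \<le> f x y\<close> by (intro integrableI_nonneg) (auto simp: case_prod_beta)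
  have "ennreal (integral\<^sup>L (M1 \<Otimes>\<^sub>M M2) (\<lambda>(x, y). f x y)) = ennreal c"
    using nn_integral_eq_integral[OF int] nn_pair \<open>\<And>x y. 0 \<le> f x y\<close> by (simp add: case_prod_beta)
  then have "integral\<^sup>L (M1 \<Otimes>\<^sub>M M2) (\<lambda>(x, y). f x y) = c"
    using \<open>0 \<le> c\<close> \<open>\<And>x y. 0 \<le> f x y\<close> by (simp add: case_prod_beta)
  then show ?thesis
    using integral_fst'[OF int] by simp
qed

lemma rhoZ_pos: "Z \<in> Siegel2 \<Longrightarrow> 0 < rhoZ Z"
  by (cases Z) (simp add: Siegel2_def rhoZ_def rhoZW_def mult.commute)

lemma rhoZ_nact: "rhoZ (nact a b W) = rhoZ W"
  by (cases W) (simp add: rhoZ_def rhoZW_def nact_def cmod_power2 algebra_simps, simp add: power2_eq_square)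

lemma Re_rhoZW_nact:
  "Re (rhoZW Z (nact a b W)) = (rhoZ Z + rhoZ W + (cmod (a + cnj (snd W - snd Z)))\<^sup>2) / 2"
  by (cases Z; cases W)
     (simp add: rhoZ_def rhoZW_def nact_def cmod_power2 algebra_simps, simp add: power2_eq_square algebra_simps)

lemma Im_rhoZW_nact: "Im (rhoZW Z (nact a b W)) = b + Im (rhoZW Z (nact a 0 W))"
  by (simp add: rhoZW_def nact_def)

lemma uZW_nact:
  "uZW Z (nact a b W)
     = ((((rhoZ Z + rhoZ W) / 2 + (cmod (a + cnj (snd W - snd Z)))\<^sup>2 / 2)\<^sup>2
          + (b + Im (rhoZW Z (nact a 0 W)))\<^sup>2) / (rhoZ Z * rhoZ W)) - 1"
  unfolding uZW_def cmod_power2 Re_rhoZW_nact rhoZ_nact Im_rhoZW_nact[of _ _ b]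
  by (simp add: add_divide_distrib)

lemma borel_measurable_kern_nact [measurable (raw)]:
  assumes "\<Phi> \<in> borel_measurable borel" "f \<in> borel_measurable M" "g \<in> borel_measurable M"
  shows "(\<lambda>x. kern \<Phi> Z (nact (f x) (g x) W)) \<in> borel_measurable M"
  using assms unfolding kern_def uZW_def rhoZW_def rhoZ_def nact_def by measurable

lemma C2c_integrable:
  assumes "C2c \<Phi>"
  shows "integrable lborel \<Phi>"
proof -
  obtain \<Phi>' where "\<And>x. (\<Phi> has_real_derivative \<Phi>' x) (at x)" and "compact (closure {x. \<Phi> x \<noteq> 0})"
    using assms unfolding C2c_def by blast
  then have "continuous_on UNIV \<Phi>"
    by (intro continuous_at_imp_continuous_on) (use DERIV_isCont in blast)
  then have "integrable lborel (\<lambda>x. indicator (closure {x. \<Phi> x \<noteq> 0}) x *\<^sub>R \<Phi> x)"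
    using \<open>compact (closure {x. \<Phi> x \<noteq> 0})\<close>
    by (intro borel_integrable_compact) (auto intro: continuous_on_subset)
  moreover have "(\<lambda>x. indicator (closure {x. \<Phi> x \<noteq> 0}) x *\<^sub>R \<Phi> x) = \<Phi>"
    using closure_subset[of "{x. \<Phi> x \<noteq> 0}"] by (auto simp: fun_eq_iff split: split_indicator)
  ultimately show ?thesis by (simp only:)
qed

lemma arccos_Pfun_integrand_bounds:
  fixes u v :: real
  assumes "-1 < v" "v \<le> u"
  shows "0 \<le> arccos ((1 - u + 2 * v) / (1 + u)) \<and> arccos ((1 - u + 2 * v) / (1 + u)) \<le> pi"
proof -
  have "-1 \<le> (1 - u + 2 * v) / (1 + u) \<and> (1 - u + 2 * v) / (1 + u) \<le> 1"
    using assms by (auto simp: field_simps)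
  then show ?thesis by (auto intro: arccos_lbound arccos_ubound)
qed

lemma Pfun_nonneg:
  assumes "\<And>x. 0 \<le> \<Phi> x" "-1 < v"
  shows "0 \<le> Pfun \<Phi> v"
  unfolding Pfun_def set_lebesgue_integral_def
  using assms arccos_Pfun_integrand_bounds[OF \<open>-1 < v\<close>]
  by (intro Bochner_Integration.integral_nonneg) (auto split: split_indicator)

lemma nn_integral_eq_Pfun:
  assumes "integrable lborel \<Phi>" "\<And>x. 0 \<le> \<Phi> x" "-1 < v"
  shows "(\<integral>\<^sup>+u. ennreal (\<Phi> u * arccos ((1 - u + 2 * v) / (1 + u))) * indicator {v..} u \<partial>lborel)
       = ennreal (Pfun \<Phi> v)"
proof -
  let ?f = "\<lambda>u. indicator {v..} u *\<^sub>R (\<Phi> u * arccos ((1 - u + 2 * v) / (1 + u)))"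
  have [measurable]: "\<Phi> \<in> borel_measurable borel"
    using borel_measurable_integrable[OF \<open>integrable lborel \<Phi>\<close>] by simp
  have bounds: "v \<le> u \<Longrightarrow> 0 \<le> arccos ((1 - u + 2 * v) / (1 + u)) \<and> arccos ((1 - u + 2 * v) / (1 + u)) \<le> pi" for u
    using arccos_Pfun_integrand_bounds[OF \<open>-1 < v\<close>] by blast
  have "integrable lborel ?f"
  proof (rule Bochner_Integration.integrable_bound)
    show "integrable lborel (\<lambda>u. pi * \<Phi> u)" using assms(1) by (rule integrable_mult_right)
    show "AE u in lborel. norm (?f u) \<le> norm (pi * \<Phi> u)"
    proof (rule AE_I2)
      fix u
      show "norm (?f u) \<le> norm (pi * \<Phi> u)"
      proof (cases "v \<le> u")
        case True
        with bounds assms(2) have "\<Phi> u * arccos ((1 - u + 2 * v) / (1 + u)) \<le> \<Phi> u * pi"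
          by (intro mult_left_mono) auto
        with True bounds[OF True] assms(2)[of u] show ?thesis by (simp add: mult.commute)
      qed simp
    qed
  qed measurable
  then have "(\<integral>\<^sup>+u. ennreal (?f u) \<partial>lborel) = ennreal (Pfun \<Phi> v)"
    unfolding Pfun_def set_lebesgue_integral_def
    using bounds assms(2) by (intro nn_integral_eq_integral) (auto split: split_indicator)
  then show ?thesis by (simp add: indicator_mult_ennreal mult.commute)
qed

lemma gfun_ln_diff:
  assumes "0 < r" "0 < r'"
  shows "gfun \<Phi> (ln r' - ln r) = Pfun \<Phi> ((r + r')\<^sup>2 / (4 * r * r') - 1)"
proof -
  have "(exp (ln r' - ln r) + exp (- (ln r' - ln r)) - 2) / 4 = (r + r')\<^sup>2 / (4 * r * r') - 1"
    using assms by (simp add: exp_diff exp_minus field_simps power2_eq_square)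
  then show ?thesis unfolding gfun_def by (rule arg_cong)
qed

lemma nn_integral_kern_nact:
  fixes \<Phi> :: "real \<Rightarrow> real"
  assumes [measurable]: "\<Phi> \<in> borel_measurable borel" and "Z \<in> Siegel2" "W \<in> Siegel2"
  defines "v \<equiv> (rhoZ Z + rhoZ W)\<^sup>2 / (4 * rhoZ Z * rhoZ W) - 1"
  shows "(\<integral>\<^sup>+a. (\<integral>\<^sup>+b. ennreal (2 * kern \<Phi> Z (nact a b W)) \<partial>lborel) \<partial>lborel)
       = ennreal (2 * pi * rhoZ Z * rhoZ W)
         * (\<integral>\<^sup>+u. ennreal (\<Phi> u * arccos ((1 - u + 2 * v) / (1 + u))) * indicator {v..} u \<partial>lborel)"
proof -
  define t0 where "t0 = (rhoZ Z + rhoZ W) / 2"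
  define R where "R = rhoZ Z * rhoZ W"
  have "0 < rhoZ Z" "0 < rhoZ W" using assms rhoZ_pos by auto
  then have "0 < t0" "0 < R" and v: "t0\<^sup>2 / R = 1 + v"
    by (auto simp: t0_def R_def v_def power_divide)
  have "(\<integral>\<^sup>+a. (\<integral>\<^sup>+b. ennreal (2 * kern \<Phi> Z (nact a b W)) \<partial>lborel) \<partial>lborel)
      = (\<integral>\<^sup>+a. (\<integral>\<^sup>+b. ennreal (2 * \<Phi> (((t0 + (cmod (a + cnj (snd W - snd Z)))\<^sup>2 / 2)\<^sup>2
                 + (b + Im (rhoZW Z (nact a 0 W)))\<^sup>2) / R - 1)) \<partial>lborel) \<partial>lborel)"
    by (simp add: kern_def uZW_nact t0_def R_def)
  also have "\<dots> = ennreal (2 * pi * R) *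
        (\<integral>\<^sup>+x. ennreal (2 * \<Phi> (x - 1)) * ennreal (arccos (sqrt ((1 + v) / x))) * indicator {1 + v..} x \<partial>lborel)"
    unfolding v[symmetric] by (rule nn_integral_heisenberg_orbit[OF _ \<open>0 < t0\<close> \<open>0 < R\<close>]) measurable
  also have "(\<integral>\<^sup>+x. ennreal (2 * \<Phi> (x - 1)) * ennreal (arccos (sqrt ((1 + v) / x))) * indicator {1 + v..} x \<partial>lborel)
      = (\<integral>\<^sup>+u. ennreal (\<Phi> u * arccos ((1 - u + 2 * v) / (1 + u))) * indicator {v..} u \<partial>lborel)"
  proof -
    have "ennreal (2 * \<Phi> u) * ennreal (arccos (sqrt ((1 + v) / (1 + u)))) * indicator {1 + v..} (1 + u)
        = ennreal (\<Phi> u * arccos ((1 - u + 2 * v) / (1 + u))) * indicator {v..} u" for u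
    proof (cases "v \<le> u")
      case True
      have "0 < 1 + v" using v \<open>0 < t0\<close> \<open>0 < R\<close> by (metis divide_pos_pos zero_less_power)
      with True have q: "0 \<le> (1 + v) / (1 + u)" "(1 + v) / (1 + u) \<le> 1" by auto
      have "(1 - u + 2 * v) / (1 + u) = 2 * ((1 + v) / (1 + u)) - 1"
        using \<open>0 < 1 + v\<close> True by (simp add: field_simps)
      then have "arccos ((1 - u + 2 * v) / (1 + u)) = 2 * arccos (sqrt ((1 + v) / (1 + u)))"
        using arccos_2_mult_minus_1[OF q] by simp
      moreover have "0 \<le> arccos (sqrt ((1 + v) / (1 + u)))"
        using q by (intro arccos_lbound) (auto intro: order.trans[OF _ real_sqrt_ge_zero])
      ultimately show ?thesis
        using True by (simp add: ennreal_mult''[symmetric] mult_ac)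
    qed simp
    then show ?thesis by (subst nn_integral_real_affine[where c = 1 and t = 1]) simp_all
  qed
  finally show ?thesis by (simp add: R_def mult.assoc)
qed

theorem theorem2p3:
  fixes \<Phi> :: "real \<Rightarrow> real" and Z Z' :: "complex \<times> complex"
  assumes "C2c \<Phi>"
    and "\<And>x. \<Phi> x \<ge> 0"
    and "Z \<in> Siegel2" and "Z' \<in> Siegel2"
  shows "(LINT b|lborel. LINT a|lborel. 2 * kern \<Phi> Z (nact a b Z'))
         = 2 * pi * rhoZ Z * rhoZ Z' * gfun \<Phi> (ln (rhoZ Z') - ln (rhoZ Z))"
proof -
  have "integrable lborel \<Phi>" using \<open>C2c \<Phi>\<close> by (rule C2c_integrable)
  then have [measurable]: "\<Phi> \<in> borel_measurable borel" by (simp add: borel_measurable_integrable)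
  have "0 < rhoZ Z" "0 < rhoZ Z'" using assms(3,4) by (auto intro: rhoZ_pos)
  define v where "v = (rhoZ Z + rhoZ Z')\<^sup>2 / (4 * rhoZ Z * rhoZ Z') - 1"
  have "-1 < v" unfolding v_def using \<open>0 < rhoZ Z\<close> \<open>0 < rhoZ Z'\<close> by simp
  have "(\<integral>\<^sup>+b. (\<integral>\<^sup>+a. ennreal (2 * kern \<Phi> Z (nact a b Z')) \<partial>lborel) \<partial>lborel)
      = (\<integral>\<^sup>+a. (\<integral>\<^sup>+b. ennreal (2 * kern \<Phi> Z (nact a b Z')) \<partial>lborel) \<partial>lborel)"
    by (rule lborel_pair.Fubini') measurable
  also have "\<dots> = ennreal (2 * pi * rhoZ Z * rhoZ Z' * Pfun \<Phi> v)"
    using nn_integral_kern_nact[OF _ assms(3,4)] nn_integral_eq_Pfun[OF \<open>integrable lborel \<Phi>\<close> assms(2) \<open>-1 < v\<close>]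
      \<open>0 < rhoZ Z\<close> \<open>0 < rhoZ Z'\<close> by (simp add: v_def ennreal_mult'[symmetric])
  finally have "(LINT b|lborel. LINT a|lborel. 2 * kern \<Phi> Z (nact a b Z')) = 2 * pi * rhoZ Z * rhoZ Z' * Pfun \<Phi> v"
    using assms(2) Pfun_nonneg[OF assms(2) \<open>-1 < v\<close>] \<open>0 < rhoZ Z\<close> \<open>0 < rhoZ Z'\<close>
    by (intro lborel_pair.integral_iterated_eq_of_nn_integral_iterated) (measurable, simp_all add: kern_def)
  then show ?thesis using gfun_ln_diff[OF \<open>0 < rhoZ Z\<close> \<open>0 < rhoZ Z'\<close>] by (simp add: v_def)
qed

end
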